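(* Fix an integer $\Delta\ge3$ and $\kappa\in(1,\Delta/2]$. Let $$\beta=\tfrac12\,e^{-\left(1+\frac{2}{\kappa-1}\right)}\left(\frac{\Delta}{2\kappa}\right)^{-\left(1+\frac{1}{\kappa-1}\right)},$$ and for each integer $n\ge\beta^{-1}$ set $r=r(n)=\lfloor\beta n\rfloor$. Let $G$ be uniformly random in $\mathcal{G}_{n,\Delta}$. Then asymptotically almost surely $\alpha_r(G)\le\kappa$.
   Context: $\mathcal{G}_{n,\Delta}$ is the uniform probability space of all $\Delta$-regular simple graphs on vertex set $\{1,\dots,n\}$ (with $n$ even if $\Delta$ is odd); asymptotically almost surely means with probability tending to $1$ as $n\to\infty$. For an $n$-vertex graph $G$ and positive integer $r$, $\alpha_r(G)=\frac1r\max_{S\subseteq V,|S|=r}e_G(S)$, where $e_G(S)$ is the number of edges with both endpoints in $S$. *)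

theory Defs
  imports "HOL-Analysis.Analysis"
begin

definition simple_graphs :: "nat \<Rightarrow> nat set set set" where
  "simple_graphs n = {E. E \<subseteq> {e. e \<subseteq> {1..n} \<and> card e = 2}}"

definition degree :: "nat set set \<Rightarrow> nat \<Rightarrow> nat" where
  "degree E v = card {e \<in> E. v \<in> e}"

text \<open>The (finite) set of all Delta-regular simple graphs on {1..n};
  G(n,Delta) is the uniform distribution on this set.\<close>
definition regular_graphs :: "nat \<Rightarrow> nat \<Rightarrow> nat set set set" where
  "regular_graphs n \<Delta> = {E \<in> simple_graphs n. \<forall>v \<in> {1..n}. degree E v = \<Delta>}"

definition prob_reg :: "nat \<Rightarrow> nat \<Rightarrow> (nat set set \<Rightarrow> bool) \<Rightarrow> real" where
  "prob_reg n \<Delta> P = real (card {E \<in> regular_graphs n \<Delta>. P E}) / real (card (regular_graphs n \<Delta>))"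

text \<open>Asymptotically almost surely in G(n,Delta): the probability of P n tends to 1
  as n \<rightarrow> \<infinity> over the admissible n (n even if Delta odd).\<close>
definition aas_reg :: "nat \<Rightarrow> (nat \<Rightarrow> nat set set \<Rightarrow> bool) \<Rightarrow> bool" where
  "aas_reg \<Delta> P \<longleftrightarrow>
     (\<forall>\<epsilon>>0. \<exists>N. \<forall>n\<ge>N. (even n \<or> even \<Delta>) \<longrightarrow> prob_reg n \<Delta> (P n) \<ge> 1 - \<epsilon>)"

definition edges_in :: "nat set set \<Rightarrow> nat set \<Rightarrow> nat" where
  "edges_in E S = card {e \<in> E. e \<subseteq> S}"

definition alpha_r :: "nat \<Rightarrow> nat set set \<Rightarrow> nat \<Rightarrow> real" where
  "alpha_r n E r = real (Max {edges_in E S | S. S \<subseteq> {1..n} \<and> card S = r}) / real r"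

end

theory Submission
  imports Defs
begin

text \<open>If \<alpha>_r(G) > \<kappa>, some r-set S spans k = \<lfloor>\<kappa> r\<rfloor> + 1 edges, so G contains a k-set F of
  pairs inside S. Switchings bound the number of \<Delta>-regular graphs containing F: a graph
  containing F + uv can be switched along about n\<Delta> arcs xy (replacing uv, xy by ux, vy) to a
  graph containing F, and each image arises from at most \<Delta>^2 switchings, since x \<in> N(u) and
  y \<in> N(v) afterwards. Hence Pr[F \<subseteq> G] \<le> (\<Delta>^2 / L)^|F| with L = n\<Delta>(1 - 4\<kappa>\<beta>/\<Delta>), and the
  union bound over S and F gives binom(n, r) binom(binom(r, 2), k) (\<Delta>^2 / L)^k \<le> \<theta>^r, where the
  choice of \<beta> makes \<theta> = 2^(1 - \<kappa>) (1 - 4\<kappa>\<beta>/\<Delta>)^(-\<kappa>) < 1.\<close>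

definition two_subsets :: "'a set \<Rightarrow> 'a set set" where
  "two_subsets V = {e. e \<subseteq> V \<and> card e = 2}"

definition neighbours :: "'a set set \<Rightarrow> 'a \<Rightarrow> 'a set" where
  "neighbours E x = {y. {x, y} \<in> E}"

definition arcs :: "'a set set \<Rightarrow> ('a \<times> 'a) set" where
  "arcs E = {(x, y). {x, y} \<in> E}"

lemma two_subsetsE:
  assumes "e \<in> two_subsets V"
  obtains a b where "e = {a, b}" "a \<noteq> b" "a \<in> V" "b \<in> V"
  using assms unfolding two_subsets_def by (auto simp: card_2_iff)

lemma doubleton_in_two_subsets: "a \<noteq> b \<Longrightarrow> a \<in> V \<Longrightarrow> b \<in> V \<Longrightarrow> {a, b} \<in> two_subsets V"
  unfolding two_subsets_def by auto

lemma finite_two_subsets: "finite V \<Longrightarrow> finite (two_subsets V)"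
  unfolding two_subsets_def by (rule finite_subset[of _ "Pow V"]) auto

lemma card_two_subsets: "finite V \<Longrightarrow> card (two_subsets V) = card V choose 2"
  unfolding two_subsets_def using n_subsets[of V 2] by simp

lemma two_subsets_mono: "V \<subseteq> W \<Longrightarrow> two_subsets V \<subseteq> two_subsets W"
  unfolding two_subsets_def by auto

lemma neighbours_subset: "E \<subseteq> two_subsets V \<Longrightarrow> neighbours E x \<subseteq> V"
  unfolding neighbours_def two_subsets_def by auto

lemma finite_neighbours: "E \<subseteq> two_subsets V \<Longrightarrow> finite V \<Longrightarrow> finite (neighbours E x)"
  using neighbours_subset finite_subset by metis

lemma card_neighbours:
  assumes "E \<subseteq> two_subsets V"
  shows "card (neighbours E x) = degree E x"
proof -
  have "bij_betw (\<lambda>y. {x, y}) (neighbours E x) {e \<in> E. x \<in> e}"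
  proof (rule bij_betwI')
    show "\<exists>y \<in> neighbours E x. e = {x, y}" if "e \<in> {e \<in> E. x \<in> e}" for e
    proof -
      have "e \<in> E" "x \<in> e"
        using that by auto
      moreover obtain a b where "e = {a, b}"
        using assms calculation by (meson subsetD two_subsetsE)
      ultimately show ?thesis
        by (auto simp: neighbours_def insert_commute)
    qed
  qed (auto simp: neighbours_def doubleton_eq_iff)
  then show ?thesis
    unfolding degree_def by (rule bij_betw_same_card)
qed

lemma arcs_subset: "E \<subseteq> two_subsets V \<Longrightarrow> arcs E \<subseteq> V \<times> V"
  unfolding arcs_def two_subsets_def by auto

lemma card_arcs_le:
  assumes "finite G" "G \<subseteq> two_subsets V"
  shows "card (arcs G) \<le> 2 * card G"
proof -
  have "arcs G = (\<Union>e \<in> G. {(x, y). {x, y} = e})"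
    unfolding arcs_def by auto
  also have "card \<dots> \<le> (\<Sum>e \<in> G. card {(x, y). {x, y} = e})"
    using assms(1) by (rule card_UN_le)
  also have "\<dots> \<le> (\<Sum>e \<in> G. 2)"
  proof (rule sum_mono)
    fix e assume "e \<in> G"
    then obtain a b where "e = {a, b}" "a \<noteq> b"
      using assms(2) by (meson subsetD two_subsetsE)
    then have "{(x, y). {x, y} = e} = {(a, b), (b, a)}"
      by (auto simp: doubleton_eq_iff)
    then show "card {(x, y). {x, y} = e} \<le> 2"
      by (simp add: card_insert_le_m1)
  qed
  finally show ?thesis by simp
qed

lemma regular_graphs_subset: "E \<in> regular_graphs n \<Delta> \<Longrightarrow> E \<subseteq> two_subsets {1..n}"
  unfolding regular_graphs_def simple_graphs_def two_subsets_def by auto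

lemma finite_regular_graph: "E \<in> regular_graphs n \<Delta> \<Longrightarrow> finite E"
  by (meson finite_atLeastAtMost finite_subset finite_two_subsets regular_graphs_subset)

lemma finite_regular_graphs: "finite (regular_graphs n \<Delta>)"
proof -
  have "regular_graphs n \<Delta> \<subseteq> Pow (two_subsets {1..n})"
    using regular_graphs_subset by blast
  then show ?thesis
    using finite_two_subsets[of "{1..n}"] by (auto intro: finite_subset)
qed

lemma card_neighbours_regular:
  "E \<in> regular_graphs n \<Delta> \<Longrightarrow> v \<in> {1..n} \<Longrightarrow> card (neighbours E v) = \<Delta>"
  using card_neighbours[OF regular_graphs_subset] unfolding regular_graphs_def by auto

lemma card_neighbours_regular_le:
  assumes "E \<in> regular_graphs n \<Delta>"
  shows "card (neighbours E v) \<le> \<Delta>"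
proof (cases "v \<in> {1..n}")
  case False
  then have "neighbours E v = {}"
    using regular_graphs_subset[OF assms] unfolding neighbours_def two_subsets_def by auto
  then show ?thesis by simp
qed (use card_neighbours_regular[OF assms] in simp)

lemma finite_neighbours_regular: "E \<in> regular_graphs n \<Delta> \<Longrightarrow> finite (neighbours E v)"
  using finite_neighbours[OF regular_graphs_subset] by blast

lemma card_arcs_regular:
  assumes "E \<in> regular_graphs n \<Delta>"
  shows "card (arcs E) = n * \<Delta>"
proof -
  have "arcs E = Sigma {1..n} (neighbours E)"
    using regular_graphs_subset[OF assms] by (auto simp: arcs_def neighbours_def two_subsets_def)
  then have "card (arcs E) = card (Sigma {1..n} (neighbours E))"
    by simp
  also have "\<dots> = (\<Sum>v \<in> {1..n}. card (neighbours E v))"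
    using finite_neighbours_regular[OF assms] by (intro card_SigmaI) auto
  also have "\<dots> = (\<Sum>v \<in> {1..n}. \<Delta>)"
    using card_neighbours_regular[OF assms] by (intro sum.cong) auto
  finally show ?thesis by simp
qed

lemma finite_arcs_regular: "E \<in> regular_graphs n \<Delta> \<Longrightarrow> finite (arcs E)"
  by (rule finite_subset[OF arcs_subset[OF regular_graphs_subset]]) auto

lemma card_two_step_walks_le:
  assumes "E \<in> regular_graphs n \<Delta>"
  shows "card (Sigma (neighbours E w) (neighbours E)) \<le> \<Delta>^2"
proof -
  have "card (Sigma (neighbours E w) (neighbours E)) = (\<Sum>a \<in> neighbours E w. card (neighbours E a))"
    using finite_neighbours_regular[OF assms] by (intro card_SigmaI) auto
  also have "\<dots> \<le> card (neighbours E w) * \<Delta>"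
    using sum_bounded_above[of "neighbours E w" "\<lambda>a. card (neighbours E a)" \<Delta>]
      card_neighbours_regular_le[OF assms] by simp
  also have "\<dots> \<le> \<Delta>^2"
    using card_neighbours_regular_le[OF assms] by (simp add: power2_eq_square)
  finally show ?thesis .
qed

lemma degree_doubletons:
  assumes "a \<noteq> b"
  shows "degree {a, b} w = (if w \<in> a then 1 else 0) + (if w \<in> b then 1 else 0)"
proof -
  have "{e \<in> {a, b}. w \<in> e} = (if w \<in> a then {a} else {}) \<union> (if w \<in> b then {b} else {})"
    by auto
  then show ?thesis
    unfolding degree_def using assms by (cases "w \<in> a"; cases "w \<in> b") auto
qed

lemma degree_exchange:
  assumes "finite E" "D \<subseteq> E" "A \<inter> E = {}" "finite A" "degree D w = degree A w"
  shows "degree (E - D \<union> A) w = degree E w"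
proof -
  have eq: "{e \<in> E - D \<union> A. w \<in> e} = ({e \<in> E. w \<in> e} - {e \<in> D. w \<in> e}) \<union> {e \<in> A. w \<in> e}"
    by auto
  have "degree (E - D \<union> A) w = card ({e \<in> E. w \<in> e} - {e \<in> D. w \<in> e}) + degree A w"
    unfolding degree_def eq using assms(1-4) by (subst card_Un_disjoint) (auto intro: finite_subset)
  moreover have "card ({e \<in> E. w \<in> e} - {e \<in> D. w \<in> e}) = degree E w - degree D w"
    unfolding degree_def using assms by (intro card_Diff_subset) (auto intro: finite_subset)
  moreover have "degree D w \<le> degree E w"
    unfolding degree_def using assms by (intro card_mono) auto
  ultimately show ?thesis
    using assms(5) by simp
qed

subsection \<open>Switchings\<close>

definition switch :: "'a \<Rightarrow> 'a \<Rightarrow> 'a \<Rightarrow> 'a \<Rightarrow> 'a set set \<Rightarrow> 'a set set" where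
  "switch u v x y E = E - {{u, v}, {x, y}} \<union> {{u, x}, {v, y}}"

definition switchable :: "'a \<Rightarrow> 'a \<Rightarrow> 'a \<Rightarrow> 'a \<Rightarrow> 'a set set \<Rightarrow> bool" where
  "switchable u v x y E \<longleftrightarrow> {u, v} \<in> E \<and> {x, y} \<in> E \<and> u \<noteq> v \<and> x \<noteq> y
     \<and> x \<notin> {u, v} \<and> y \<notin> {u, v} \<and> {u, x} \<notin> E \<and> {v, y} \<notin> E"

lemma switch_switch:
  assumes "switchable u v x y E"
  shows "switch u x v y (switch u v x y E) = E"
proof -
  have "{{u, v}, {x, y}} \<subseteq> E" "{{u, x}, {v, y}} \<inter> E = {}"
    using assms unfolding switchable_def by auto
  then show ?thesis
    unfolding switch_def by (auto simp: insert_commute)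
qed

lemma switch_regular:
  assumes E: "E \<in> regular_graphs n \<Delta>" and sw: "switchable u v x y E"
  shows "switch u v x y E \<in> regular_graphs n \<Delta>"
proof -
  have sub: "E \<subseteq> two_subsets {1..n}"
    using regular_graphs_subset[OF E] .
  then have "u \<in> {1..n}" "v \<in> {1..n}" "x \<in> {1..n}" "y \<in> {1..n}"
    using sw unfolding switchable_def two_subsets_def by auto
  then have "switch u v x y E \<in> simple_graphs n"
    using sub sw unfolding simple_graphs_def two_subsets_def switch_def switchable_def by auto
  moreover have "degree (switch u v x y E) w = \<Delta>" if "w \<in> {1..n}" for w
  proof -
    have "{u, v} \<noteq> {x, y}" "{u, x} \<noteq> {v, y}"
      using sw unfolding switchable_def by (auto simp: doubleton_eq_iff)
    then have "degree {{u, v}, {x, y}} w = degree {{u, x}, {v, y}} w"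
      using sw unfolding switchable_def by (simp add: degree_doubletons)
    then have "degree (switch u v x y E) w = degree E w"
      unfolding switch_def using sw finite_regular_graph[OF E]
      by (intro degree_exchange) (auto simp: switchable_def)
    then show ?thesis
      using E that unfolding regular_graphs_def by auto
  qed
  ultimately show ?thesis
    unfolding regular_graphs_def by auto
qed

text \<open>The arcs (x, y) along which the edge uv of a graph containing F + uv can be switched to
  ux, vy: the switching is admissible and does not destroy an edge of F.\<close>

definition switch_arcs :: "'a set set \<Rightarrow> 'a \<Rightarrow> 'a \<Rightarrow> 'a set set \<Rightarrow> ('a \<times> 'a) set" where
  "switch_arcs F u v E = {(x, y) \<in> arcs E. {x, y} \<notin> insert {u, v} F
     \<and> x \<notin> {u, v} \<and> y \<notin> {u, v} \<and> {u, x} \<notin> E \<and> {v, y} \<notin> E}"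

lemma switch_arcs_subset: "switch_arcs F u v E \<subseteq> arcs E"
  unfolding switch_arcs_def by auto

lemma arcs_subset_switch_arcs:
  "arcs E \<subseteq> switch_arcs F u v E \<union> arcs (insert {u, v} F)
     \<union> ({u} \<times> neighbours E u \<union> {v} \<times> neighbours E v)
     \<union> (neighbours E u \<times> {u} \<union> neighbours E v \<times> {v})
     \<union> Sigma (neighbours E u) (neighbours E) \<union> prod.swap ` Sigma (neighbours E v) (neighbours E)"
  by (auto simp: arcs_def switch_arcs_def neighbours_def insert_commute image_iff)

lemma card_arcs_insert_le:
  assumes "finite F" "F \<subseteq> two_subsets V" "u \<noteq> v"
  shows "card (arcs (insert {u, v} F)) \<le> 2 * card F + 2"
proof -
  have "insert {u, v} F \<subseteq> two_subsets (insert u (insert v V))"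
    using assms two_subsets_mono[of V "insert u (insert v V)"] by (auto intro: doubleton_in_two_subsets)
  with assms(1) have "card (arcs (insert {u, v} F)) \<le> 2 * card (insert {u, v} F)"
    by (intro card_arcs_le) auto
  also have "\<dots> \<le> 2 * card F + 2"
    using assms(1) by (simp add: card_insert_if)
  finally show ?thesis .
qed

text \<open>The exceptional arcs are those of F + uv, those at u or v, and those whose switching
  would create ux or vy a second time.\<close>

lemma card_switch_arcs_ge:
  assumes E: "E \<in> regular_graphs n \<Delta>"
    and F: "finite F" "F \<subseteq> two_subsets {1..n}" and uv: "u \<noteq> v" "u \<in> {1..n}" "v \<in> {1..n}"
  shows "n * \<Delta> \<le> card (switch_arcs F u v E) + (2 * card F + 2 + 4 * \<Delta> + 2 * \<Delta>^2)"
proof -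
  let ?N = "neighbours E"
  let ?X = "arcs (insert {u, v} F) \<union> ({u} \<times> ?N u \<union> {v} \<times> ?N v) \<union> (?N u \<times> {u} \<union> ?N v \<times> {v})
    \<union> Sigma (?N u) ?N \<union> prod.swap ` Sigma (?N v) ?N"
  have fin: "finite (?N w)" and deg: "card (?N w) \<le> \<Delta>" for w
    using finite_neighbours_regular[OF E] card_neighbours_regular_le[OF E] .
  have "insert {u, v} F \<subseteq> two_subsets {1..n}"
    using F uv by (auto intro: doubleton_in_two_subsets)
  then have "finite ?X"
    using fin by (auto intro: finite_subset[OF arcs_subset])
  have "card ?X \<le> card (arcs (insert {u, v} F)) + card ({u} \<times> ?N u \<union> {v} \<times> ?N v)
      + card (?N u \<times> {u} \<union> ?N v \<times> {v}) + card (Sigma (?N u) ?N) + card (prod.swap ` Sigma (?N v) ?N)"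
    by (meson add_mono card_Un_le le_refl order_trans)
  moreover have "card (arcs (insert {u, v} F)) \<le> 2 * card F + 2"
    using card_arcs_insert_le F(1,2) uv(1) .
  moreover have "card ({u} \<times> ?N u \<union> {v} \<times> ?N v) \<le> 2 * \<Delta>" "card (?N u \<times> {u} \<union> ?N v \<times> {v}) \<le> 2 * \<Delta>"
    using deg[of u] deg[of v] by (auto intro!: le_trans[OF card_Un_le] simp: card_cartesian_product)
  moreover have "card (Sigma (?N u) ?N) \<le> \<Delta>^2"
    using card_two_step_walks_le[OF E] .
  moreover have "card (prod.swap ` Sigma (?N v) ?N) \<le> \<Delta>^2"
    using fin by (intro le_trans[OF card_image_le card_two_step_walks_le[OF E]]) auto
  ultimately have X: "card ?X \<le> 2 * card F + 2 + 4 * \<Delta> + 2 * \<Delta>^2"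
    by linarith
  have "n * \<Delta> = card (arcs E)"
    using card_arcs_regular[OF E] by simp
  also have "\<dots> \<le> card (switch_arcs F u v E \<union> ?X)"
  proof (rule card_mono)
    show "finite (switch_arcs F u v E \<union> ?X)"
      using \<open>finite ?X\<close> finite_subset[OF switch_arcs_subset finite_arcs_regular[OF E]] by blast
    show "arcs E \<subseteq> switch_arcs F u v E \<union> ?X"
      using arcs_subset_switch_arcs[of E F u v] by blast
  qed
  also have "\<dots> \<le> card (switch_arcs F u v E) + card ?X"
    by (rule card_Un_le)
  finally show ?thesis
    using X by linarith
qed

definition regular_graphs_containing :: "nat \<Rightarrow> nat \<Rightarrow> nat set set \<Rightarrow> nat set set set" where
  "regular_graphs_containing n \<Delta> F = {E \<in> regular_graphs n \<Delta>. F \<subseteq> E}"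

lemma finite_regular_graphs_containing: "finite (regular_graphs_containing n \<Delta> F)"
  unfolding regular_graphs_containing_def using finite_regular_graphs by simp

lemma switch_in_regular_graphs_containing:
  assumes E: "E \<in> regular_graphs_containing n \<Delta> (insert {u, v} F)"
    and xy: "(x, y) \<in> switch_arcs F u v E" and "u \<noteq> v" "{u, v} \<notin> F"
  shows "switch u v x y E \<in> regular_graphs_containing n \<Delta> F"
    and "x \<in> neighbours (switch u v x y E) u" "y \<in> neighbours (switch u v x y E) v"
    and "switchable u v x y E"
proof -
  have R: "E \<in> regular_graphs n \<Delta>" and FE: "insert {u, v} F \<subseteq> E"
    using E unfolding regular_graphs_containing_def by auto
  have "x \<noteq> y"
    using xy regular_graphs_subset[OF R] unfolding switch_arcs_def arcs_def two_subsets_def by auto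
  then show sw: "switchable u v x y E"
    using xy FE \<open>u \<noteq> v\<close> unfolding switch_arcs_def switchable_def arcs_def by auto
  have "F \<subseteq> switch u v x y E"
    using FE xy \<open>{u, v} \<notin> F\<close> unfolding switch_def switch_arcs_def by auto
  then show "switch u v x y E \<in> regular_graphs_containing n \<Delta> F"
    unfolding regular_graphs_containing_def using switch_regular[OF R sw] by auto
  show "x \<in> neighbours (switch u v x y E) u" "y \<in> neighbours (switch u v x y E) v"
    unfolding neighbours_def switch_def by auto
qed

lemma card_neighbour_pairs:
  assumes "u \<in> {1..n}" "v \<in> {1..n}"
  shows "card (Sigma (regular_graphs_containing n \<Delta> F) (\<lambda>E. neighbours E u \<times> neighbours E v))
           = card (regular_graphs_containing n \<Delta> F) * \<Delta>^2"
proof -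
  let ?B = "regular_graphs_containing n \<Delta> F"
  have B: "?B \<subseteq> regular_graphs n \<Delta>"
    unfolding regular_graphs_containing_def by auto
  have "card (Sigma ?B (\<lambda>E. neighbours E u \<times> neighbours E v))
      = (\<Sum>E \<in> ?B. card (neighbours E u) * card (neighbours E v))"
    using B finite_regular_graphs_containing finite_neighbours_regular
    by (subst card_SigmaI) (auto simp: card_cartesian_product)
  also have "\<dots> = (\<Sum>E \<in> ?B. \<Delta>^2)"
    using B card_neighbours_regular assms by (intro sum.cong) (auto simp: power2_eq_square)
  finally show ?thesis
    by simp
qed

lemma inj_on_switch:
  assumes "u \<noteq> v" "{u, v} \<notin> F"
  shows "inj_on (\<lambda>(E, x, y). (switch u v x y E, x, y))
           (Sigma (regular_graphs_containing n \<Delta> (insert {u, v} F)) (switch_arcs F u v))"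
proof (rule inj_onI, clarsimp)
  fix E E' x y
  assume "E \<in> regular_graphs_containing n \<Delta> (insert {u, v} F)" "(x, y) \<in> switch_arcs F u v E"
    and "E' \<in> regular_graphs_containing n \<Delta> (insert {u, v} F)" "(x, y) \<in> switch_arcs F u v E'"
    and eq: "switch u v x y E = switch u v x y E'"
  then have sw: "switchable u v x y E" "switchable u v x y E'"
    using switch_in_regular_graphs_containing(4)[OF _ _ assms] by blast+
  have "E = switch u x v y (switch u v x y E)"
    by (rule sym[OF switch_switch[OF sw(1)]])
  also have "\<dots> = E'"
    unfolding eq by (rule switch_switch[OF sw(2)])
  finally show "E = E'" .
qed

text \<open>Double counting of switchings: a switching is recovered from its image together with
  x \<in> N(u) and y \<in> N(v) in the new graph, so at most \<Delta>^2 switchings lead to each graph.\<close>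

lemma card_switchings_le:
  assumes "u \<noteq> v" "u \<in> {1..n}" "v \<in> {1..n}" "{u, v} \<notin> F"
  shows "card (Sigma (regular_graphs_containing n \<Delta> (insert {u, v} F)) (switch_arcs F u v))
           \<le> card (regular_graphs_containing n \<Delta> F) * \<Delta>^2"
proof -
  let ?sw = "\<lambda>(E, x, y). (switch u v x y E, x, y)"
  let ?U = "Sigma (regular_graphs_containing n \<Delta> F) (\<lambda>E. neighbours E u \<times> neighbours E v)"
  have "finite ?U"
    using finite_regular_graphs_containing finite_neighbours_regular
    by (intro finite_SigmaI) (auto simp: regular_graphs_containing_def)
  moreover have "?sw ` Sigma (regular_graphs_containing n \<Delta> (insert {u, v} F)) (switch_arcs F u v) \<subseteq> ?U"
    using switch_in_regular_graphs_containing(1-3)[OF _ _ assms(1,4)] by fastforce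
  ultimately have "card (Sigma (regular_graphs_containing n \<Delta> (insert {u, v} F)) (switch_arcs F u v))
      \<le> card ?U"
    using card_inj_on_le inj_on_switch[OF assms(1,4)] by blast
  then show ?thesis
    unfolding card_neighbour_pairs[OF assms(2,3)] .
qed

lemma card_switchings_ge:
  fixes n \<Delta> :: nat
  assumes "finite F" "F \<subseteq> two_subsets {1..n}" "u \<noteq> v" "u \<in> {1..n}" "v \<in> {1..n}"
  defines "A \<equiv> regular_graphs_containing n \<Delta> (insert {u, v} F)"
  shows "card A * (n * \<Delta>)
           \<le> card (Sigma A (switch_arcs F u v)) + card A * (2 * card F + 2 + 4 * \<Delta> + 2 * \<Delta>^2)"
proof -
  define c where "c = 2 * card F + 2 + 4 * \<Delta> + 2 * \<Delta>^2"
  have A: "A \<subseteq> regular_graphs n \<Delta>"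
    unfolding A_def regular_graphs_containing_def by auto
  have "card A * (n * \<Delta>) = (\<Sum>E \<in> A. n * \<Delta>)"
    by simp
  also have "\<dots> \<le> (\<Sum>E \<in> A. card (switch_arcs F u v E) + c)"
    using card_switch_arcs_ge[OF _ assms(1-5)] A unfolding c_def by (intro sum_mono) blast
  also have "\<dots> = (\<Sum>E \<in> A. card (switch_arcs F u v E)) + card A * c"
    by (simp add: sum.distrib)
  also have "(\<Sum>E \<in> A. card (switch_arcs F u v E)) = card (Sigma A (switch_arcs F u v))"
    using A finite_subset[OF switch_arcs_subset finite_arcs_regular] finite_regular_graphs_containing
    unfolding A_def by (intro card_SigmaI[symmetric]) auto
  finally show ?thesis
    unfolding c_def .
qed

lemma card_regular_graphs_containing_insert:
  fixes n \<Delta> :: nat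
  assumes "finite F" "F \<subseteq> two_subsets {1..n}" "u \<noteq> v" "u \<in> {1..n}" "v \<in> {1..n}" "{u, v} \<notin> F"
  defines "A \<equiv> regular_graphs_containing n \<Delta> (insert {u, v} F)"
  shows "card A * (n * \<Delta>)
           \<le> card A * (2 * card F + 2 + 4 * \<Delta> + 2 * \<Delta>^2) + \<Delta>^2 * card (regular_graphs_containing n \<Delta> F)"
proof -
  have "card A * (n * \<Delta>)
      \<le> card (Sigma A (switch_arcs F u v)) + card A * (2 * card F + 2 + 4 * \<Delta> + 2 * \<Delta>^2)"
    unfolding A_def by (rule card_switchings_ge[OF assms(1-5)])
  also have "\<dots> \<le> card (regular_graphs_containing n \<Delta> F) * \<Delta>^2 + card A * (2 * card F + 2 + 4 * \<Delta> + 2 * \<Delta>^2)"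
    unfolding A_def using card_switchings_le[OF assms(3-6)] by (rule add_right_mono)
  finally show ?thesis
    by (simp only: ac_simps)
qed

lemma card_regular_graphs_containing_le:
  fixes L :: real
  assumes L: "0 < L" "L \<le> real (n * \<Delta>) - real (2 * K + 4 * \<Delta> + 2 * \<Delta>^2)"
    and F: "finite F" "F \<subseteq> two_subsets {1..n}" "card F \<le> K"
  shows "real (card (regular_graphs_containing n \<Delta> F))
           \<le> (real \<Delta> ^ 2 / L) ^ card F * card (regular_graphs n \<Delta>)"
  using F
proof (induction F rule: finite_induct)
  case empty
  then show ?case
    by (simp add: regular_graphs_containing_def)
next
  case (insert e F)
  obtain u v where e: "e = {u, v}" "u \<noteq> v" "u \<in> {1..n}" "v \<in> {1..n}"
    using insert.prems by (auto elim: two_subsetsE)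
  define a where "a = card (regular_graphs_containing n \<Delta> (insert e F))"
  define b where "b = card (regular_graphs_containing n \<Delta> F)"
  have IH: "real b \<le> (real \<Delta> ^ 2 / L) ^ card F * card (regular_graphs n \<Delta>)"
    using insert unfolding b_def by auto
  have "a * (n * \<Delta>) \<le> a * (2 * card F + 2 + 4 * \<Delta> + 2 * \<Delta>^2) + \<Delta>^2 * b"
    using card_regular_graphs_containing_insert[of F n u v \<Delta>] insert e unfolding a_def b_def by auto
  also have "\<dots> \<le> a * (2 * K + 4 * \<Delta> + 2 * \<Delta>^2) + \<Delta>^2 * b"
    using insert by (intro add_right_mono mult_le_mono2) simp
  finally have "real a * real (n * \<Delta>) \<le> real a * real (2 * K + 4 * \<Delta> + 2 * \<Delta>^2) + \<Delta>^2 * real b"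
    by (metis of_nat_add of_nat_le_iff of_nat_mult of_nat_power)
  have "real a * L \<le> real a * (real (n * \<Delta>) - real (2 * K + 4 * \<Delta> + 2 * \<Delta>^2))"
    using L(2) by (rule mult_left_mono) simp
  also have "\<dots> \<le> \<Delta>^2 * real b"
    using \<open>real a * real (n * \<Delta>) \<le> _\<close> by (simp add: right_diff_distrib)
  finally have "real a * L \<le> \<Delta>^2 * real b" .
  then have "real a \<le> \<Delta>^2 / L * real b"
    using L(1) by (simp add: field_simps)
  also have "\<dots> \<le> \<Delta>^2 / L * ((real \<Delta> ^ 2 / L) ^ card F * card (regular_graphs n \<Delta>))"
    using IH L(1) by (intro mult_left_mono) auto
  finally show ?case
    using insert unfolding a_def by simp
qed

lemma regular_graphs_dense_subset_Union:
  "{E \<in> regular_graphs n \<Delta>. k \<le> edges_in E S}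
     \<subseteq> (\<Union>F \<in> {F. F \<subseteq> two_subsets S \<and> card F = k}. regular_graphs_containing n \<Delta> F)"
proof
  fix E assume "E \<in> {E \<in> regular_graphs n \<Delta>. k \<le> edges_in E S}"
  then have E: "E \<in> regular_graphs n \<Delta>" and "k \<le> card {e \<in> E. e \<subseteq> S}"
    unfolding edges_in_def by auto
  then obtain F where F: "F \<subseteq> {e \<in> E. e \<subseteq> S}" "card F = k"
    by (meson obtain_subset_with_card_n)
  then have "F \<subseteq> two_subsets S"
    using regular_graphs_subset[OF E] unfolding two_subsets_def by auto
  then show "E \<in> (\<Union>F \<in> {F. F \<subseteq> two_subsets S \<and> card F = k}. regular_graphs_containing n \<Delta> F)"
    using F E unfolding regular_graphs_containing_def by auto
qed

lemma card_regular_graphs_dense_le: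
  fixes L :: real
  assumes L: "0 < L" "L \<le> real (n * \<Delta>) - real (2 * k + 4 * \<Delta> + 2 * \<Delta>^2)"
    and S: "S \<subseteq> {1..n}"
  shows "real (card {E \<in> regular_graphs n \<Delta>. k \<le> edges_in E S})
           \<le> real ((card S choose 2) choose k) * (real \<Delta> ^ 2 / L) ^ k * card (regular_graphs n \<Delta>)"
proof -
  define Fs where "Fs = {F. F \<subseteq> two_subsets S \<and> card F = k}"
  have finS: "finite (two_subsets S)"
    using S by (intro finite_two_subsets) (auto intro: finite_subset)
  have finFs: "finite Fs"
    unfolding Fs_def using finS by (auto intro: finite_subset[of _ "Pow (two_subsets S)"])
  have "card {E \<in> regular_graphs n \<Delta>. k \<le> edges_in E S}
      \<le> card (\<Union>F \<in> Fs. regular_graphs_containing n \<Delta> F)"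
    using regular_graphs_dense_subset_Union finFs finite_regular_graphs_containing
    unfolding Fs_def by (intro card_mono) auto
  also have "\<dots> \<le> (\<Sum>F \<in> Fs. card (regular_graphs_containing n \<Delta> F))"
    using finFs by (rule card_UN_le)
  finally have "real (card {E \<in> regular_graphs n \<Delta>. k \<le> edges_in E S})
      \<le> (\<Sum>F \<in> Fs. real (card (regular_graphs_containing n \<Delta> F)))"
    by (simp only: of_nat_sum[symmetric] of_nat_le_iff)
  also have "\<dots> \<le> (\<Sum>F \<in> Fs. (real \<Delta> ^ 2 / L) ^ k * card (regular_graphs n \<Delta>))"
  proof (rule sum_mono)
    fix F assume "F \<in> Fs"
    then have F: "F \<subseteq> two_subsets S" "card F = k"
      unfolding Fs_def by auto
    then have "finite F" "F \<subseteq> two_subsets {1..n}"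
      using finS two_subsets_mono[OF S] by (auto intro: finite_subset)
    then show "real (card (regular_graphs_containing n \<Delta> F)) \<le> (real \<Delta> ^ 2 / L) ^ k * card (regular_graphs n \<Delta>)"
      using card_regular_graphs_containing_le[OF L, of F] F(2) by simp
  qed
  also have "card Fs = (card S choose 2) choose k"
    unfolding Fs_def using n_subsets[OF finS] card_two_subsets[of S] S by (simp add: finite_subset)
  ultimately show ?thesis
    by simp
qed

lemma card_regular_graphs_with_dense_subset_le:
  fixes L :: real
  assumes L: "0 < L" "L \<le> real (n * \<Delta>) - real (2 * k + 4 * \<Delta> + 2 * \<Delta>^2)"
  shows "real (card {E \<in> regular_graphs n \<Delta>. \<exists>S \<subseteq> {1..n}. card S = r \<and> k \<le> edges_in E S})
           \<le> real (n choose r) * real ((r choose 2) choose k) * (real \<Delta> ^ 2 / L) ^ k * card (regular_graphs n \<Delta>)"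
proof -
  define Ss where "Ss = {S. S \<subseteq> {1..n} \<and> card S = r}"
  have "{E \<in> regular_graphs n \<Delta>. \<exists>S \<subseteq> {1..n}. card S = r \<and> k \<le> edges_in E S}
      = (\<Union>S \<in> Ss. {E \<in> regular_graphs n \<Delta>. k \<le> edges_in E S})"
    unfolding Ss_def by auto
  then have "card {E \<in> regular_graphs n \<Delta>. \<exists>S \<subseteq> {1..n}. card S = r \<and> k \<le> edges_in E S}
      \<le> (\<Sum>S \<in> Ss. card {E \<in> regular_graphs n \<Delta>. k \<le> edges_in E S})"
    by (simp add: card_UN_le Ss_def)
  then have "real (card {E \<in> regular_graphs n \<Delta>. \<exists>S \<subseteq> {1..n}. card S = r \<and> k \<le> edges_in E S})
      \<le> (\<Sum>S \<in> Ss. real (card {E \<in> regular_graphs n \<Delta>. k \<le> edges_in E S}))"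
    by (simp only: of_nat_sum[symmetric] of_nat_le_iff)
  also have "\<dots> \<le> (\<Sum>S \<in> Ss. real ((r choose 2) choose k) * (real \<Delta> ^ 2 / L) ^ k * card (regular_graphs n \<Delta>))"
  proof (rule sum_mono)
    fix S assume "S \<in> Ss"
    then have "S \<subseteq> {1..n}" "card S = r"
      unfolding Ss_def by auto
    then show "real (card {E \<in> regular_graphs n \<Delta>. k \<le> edges_in E S})
        \<le> real ((r choose 2) choose k) * (real \<Delta> ^ 2 / L) ^ k * card (regular_graphs n \<Delta>)"
      using card_regular_graphs_dense_le[OF L, of S] by simp
  qed
  also have "card Ss = n choose r"
    unfolding Ss_def using n_subsets[of "{1..n}" r] by simp
  ultimately show ?thesis
    by (simp add: mult.assoc)
qed

subsection \<open>Existence of regular graphs\<close>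

text \<open>Needed because prob_reg is 0 / 0 = 0 on an empty probability space.\<close>

definition cyclic_offset :: "nat \<Rightarrow> nat \<Rightarrow> nat \<Rightarrow> nat" where
  "cyclic_offset n a b = nat ((int b - int a) mod int n)"

lemma inj_on_cyclic_offset:
  assumes "n > 0"
  shows "inj_on (cyclic_offset n a) {1..n}"
proof (rule inj_onI)
  fix b b' assume b: "b \<in> {1..n}" "b' \<in> {1..n}" and eq: "cyclic_offset n a b = cyclic_offset n a b'"
  have "(int b - int a) mod int n = (int b' - int a) mod int n"
    using eq assms unfolding cyclic_offset_def by (simp add: nat_eq_iff2)
  then have dvd: "int n dvd int b - int b'"
    by (simp add: mod_eq_dvd_iff)
  have "int b - int b' = 0"
  proof (rule ccontr)
    assume "int b - int b' \<noteq> 0"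
    then have "\<bar>int n\<bar> \<le> \<bar>int b - int b'\<bar>"
      using dvd by (rule dvd_imp_le_int)
    then show False
      using b by auto
  qed
  then show "b = b'"
    by simp
qed

lemma cyclic_offset_image:
  assumes "n > 0"
  shows "cyclic_offset n a ` {1..n} = {0..<n}"
proof -
  have "cyclic_offset n a ` {1..n} \<subseteq> {0..<n}"
    using assms unfolding cyclic_offset_def by (auto simp: nat_less_iff)
  moreover have "card (cyclic_offset n a ` {1..n}) = n"
    using card_image[OF inj_on_cyclic_offset[OF assms]] by simp
  ultimately show ?thesis
    using card_subset_eq[of "{0..<n}"] by simp
qed

lemma cyclic_offset_swap:
  assumes "n > 0" "cyclic_offset n a b \<noteq> 0"
  shows "cyclic_offset n b a = n - cyclic_offset n a b"
proof -
  have nz: "(int b - int a) mod int n \<noteq> 0"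
    using assms(2) unfolding cyclic_offset_def by auto
  have "(int a - int b) mod int n = int n - (int b - int a) mod int n"
    using nz by (metis minus_diff_eq zmod_zminus1_eq_if)
  moreover have "0 \<le> (int b - int a) mod int n" "(int b - int a) mod int n < int n"
    using assms(1) by simp_all
  ultimately have "int (cyclic_offset n b a) = int n - int (cyclic_offset n a b)"
    unfolding cyclic_offset_def by simp
  then show ?thesis
    by simp
qed

definition circulant :: "nat \<Rightarrow> nat set \<Rightarrow> nat set set" where
  "circulant n D = {{a, b} | a b. a \<in> {1..n} \<and> b \<in> {1..n} \<and> cyclic_offset n a b \<in> D}"

context
  fixes n :: nat and D :: "nat set"
  assumes n: "n > 0" and D: "D \<subseteq> {1..n - 1}" "\<And>d. d \<in> D \<Longrightarrow> n - d \<in> D"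
begin

private lemma cyclic_offset_symmetric:
  assumes "cyclic_offset n a b \<in> D"
  shows "cyclic_offset n b a \<in> D"
proof -
  have "cyclic_offset n a b \<noteq> 0"
    using assms D(1) by auto
  then have "cyclic_offset n b a = n - cyclic_offset n a b"
    by (rule cyclic_offset_swap[OF n])
  then show ?thesis
    using D(2)[OF assms] by simp
qed

lemma circulant_subset: "circulant n D \<subseteq> two_subsets {1..n}"
proof -
  have "a \<noteq> b" if "cyclic_offset n a b \<in> D" for a b
    using that D(1) unfolding cyclic_offset_def by auto
  then show ?thesis
    unfolding circulant_def by (auto intro!: doubleton_in_two_subsets)
qed

lemma degree_circulant:
  assumes "a \<in> {1..n}"
  shows "degree (circulant n D) a = card D"
proof -
  let ?f = "cyclic_offset n a"
  have "neighbours (circulant n D) a = {b \<in> {1..n}. ?f b \<in> D}"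
    using cyclic_offset_symmetric assms unfolding neighbours_def circulant_def
    by (auto simp: doubleton_eq_iff)
  moreover have "?f ` {b \<in> {1..n}. ?f b \<in> D} = D"
  proof -
    have "D \<subseteq> {0..<n}"
    proof
      fix d assume "d \<in> D"
      then have "1 \<le> d" "d \<le> n - 1"
        using D(1) by auto
      then show "d \<in> {0..<n}"
        by simp
    qed
    have "?f ` {b \<in> {1..n}. ?f b \<in> D} = ?f ` {1..n} \<inter> D"
      by auto
    also have "\<dots> = D"
      unfolding cyclic_offset_image[OF n] using \<open>D \<subseteq> {0..<n}\<close> by (rule Int_absorb1)
    finally show ?thesis .
  qed
  moreover have "inj_on ?f {b \<in> {1..n}. ?f b \<in> D}"
    using inj_on_cyclic_offset[OF n] by (rule inj_on_subset) auto
  ultimately show ?thesis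
    unfolding card_neighbours[OF circulant_subset, symmetric] by (metis card_image)
qed

lemma circulant_regular: "circulant n D \<in> regular_graphs n (card D)"
  using circulant_subset degree_circulant unfolding regular_graphs_def simple_graphs_def two_subsets_def
  by auto

end

definition circulant_offsets :: "nat \<Rightarrow> nat \<Rightarrow> nat set" where
  "circulant_offsets n \<Delta> =
     {1..\<Delta> div 2} \<union> {n - \<Delta> div 2..n - 1} \<union> (if odd \<Delta> then {n div 2} else {})"

context
  fixes n \<Delta> :: nat
  assumes n: "\<Delta> < n" "even n \<or> even \<Delta>"
begin

private lemma half_degree_lt: "2 * (\<Delta> div 2) < n"
  using n(1) by linarith

private lemma antipodal_offset:
  assumes "odd \<Delta>"
  shows "\<Delta> div 2 < n div 2" "n div 2 < n - \<Delta> div 2" "n - n div 2 = n div 2"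
proof -
  have "n = 2 * (n div 2)" "\<Delta> = 2 * (\<Delta> div 2) + 1"
    using n(2) assms by presburger+
  then show "\<Delta> div 2 < n div 2" "n div 2 < n - \<Delta> div 2" "n - n div 2 = n div 2"
    using n(1) by linarith+
qed

lemma circulant_offsets_subset: "circulant_offsets n \<Delta> \<subseteq> {1..n - 1}"
proof -
  have "\<Delta> div 2 \<le> n - 1" "1 \<le> n - \<Delta> div 2"
    using half_degree_lt by linarith+
  moreover have "1 \<le> n div 2 \<and> n div 2 \<le> n - 1" if "odd \<Delta>"
    using antipodal_offset[OF that] by linarith
  ultimately show ?thesis
    unfolding circulant_offsets_def by auto
qed

lemma circulant_offsets_symmetric:
  assumes "d \<in> circulant_offsets n \<Delta>"
  shows "n - d \<in> circulant_offsets n \<Delta>"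
proof -
  consider "d \<in> {1..\<Delta> div 2}" | "d \<in> {n - \<Delta> div 2..n - 1}" | "odd \<Delta>" "d = n div 2"
    using assms unfolding circulant_offsets_def by (auto split: if_splits)
  then show ?thesis
  proof cases
    case 1
    then have "n - d \<in> {n - \<Delta> div 2..n - 1}"
      using half_degree_lt by auto
    then show ?thesis
      unfolding circulant_offsets_def by blast
  next
    case 2
    then have "n - d \<in> {1..\<Delta> div 2}"
      using half_degree_lt by auto
    then show ?thesis
      unfolding circulant_offsets_def by blast
  next
    case 3
    then show ?thesis
      using antipodal_offset(3) unfolding circulant_offsets_def by simp
  qed
qed

lemma card_circulant_offsets: "card (circulant_offsets n \<Delta>) = \<Delta>"
proof -
  have "{1..\<Delta> div 2} \<inter> {n - \<Delta> div 2..n - 1} = {}"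
    using half_degree_lt by auto
  then have card2: "card ({1..\<Delta> div 2} \<union> {n - \<Delta> div 2..n - 1}) = 2 * (\<Delta> div 2)"
    using half_degree_lt by (simp add: card_Un_disjoint)
  show ?thesis
  proof (cases "odd \<Delta>")
    case True
    then have "n div 2 \<notin> {1..\<Delta> div 2} \<union> {n - \<Delta> div 2..n - 1}"
      using antipodal_offset(1,2) by auto
    then show ?thesis
      using card2 True unfolding circulant_offsets_def by (simp add: card_insert_disjoint)
  next
    case False
    then show ?thesis
      using card2 unfolding circulant_offsets_def by simp
  qed
qed

lemma regular_graphs_nonempty: "regular_graphs n \<Delta> \<noteq> {}"
  using circulant_regular[OF _ circulant_offsets_subset circulant_offsets_symmetric] n(1)
  unfolding card_circulant_offsets by auto

end

subsection \<open>Analytic estimates\<close>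

lemma exp_1_gt_5_div_2: "exp 1 > (5/2 :: real)"
  using e_approx_32 by (simp add: abs_if split: if_splits)

lemma exp_minus_1_lt_2_div_5: "exp (-1) < (2/5 :: real)"
  using exp_1_gt_5_div_2 by (simp add: exp_minus field_simps)

lemma power_div_fact_le_exp:
  fixes x :: real
  assumes "0 \<le> x"
  shows "x ^ k / fact k \<le> exp x"
proof -
  have "(\<Sum>n \<in> {k}. inverse (fact n) * x ^ n) \<le> (\<Sum>n. inverse (fact n) * x ^ n)"
    by (rule sum_le_suminf[OF summable_exp]) (use assms in auto)
  then show ?thesis
    by (simp add: exp_def divide_inverse mult.commute)
qed

lemma binomial_le_exp_power:
  assumes "k > 0"
  shows "real (m choose k) \<le> (exp 1 * m / k) ^ k"
proof -
  have choose: "real (m choose k) * fact k \<le> real m ^ k"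
    using binomial_fact_pow[of m k] by (metis of_nat_fact of_nat_le_iff of_nat_mult of_nat_power)
  have "exp (real k) = exp 1 ^ k"
    by (metis exp_of_nat_mult mult.right_neutral)
  then have "real k ^ k \<le> exp 1 ^ k * fact k"
    using power_div_fact_le_exp[of "real k" k] by (simp add: field_simps)
  then have "real (m choose k) * real k ^ k \<le> real (m choose k) * (exp 1 ^ k * fact k)"
    by (intro mult_left_mono) auto
  also have "\<dots> = exp 1 ^ k * (real (m choose k) * fact k)"
    by (simp only: ac_simps)
  also have "\<dots> \<le> exp 1 ^ k * real m ^ k"
    using choose by (intro mult_left_mono) auto
  finally show ?thesis
    using assms by (simp add: field_simps power_divide power_mult_distrib)
qed

lemma choose_two_le_half_square: "real (r choose 2) \<le> real r ^ 2 / 2"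
proof -
  have "2 * (r choose 2) \<le> r * r"
    unfolding choose_two by (metis diff_le_self mult_le_mono2 times_div_less_eq_dividend order_trans)
  then show ?thesis
    by (simp add: power2_eq_square flip: of_nat_mult of_nat_le_iff)
qed

lemma power_le_powr_if_le_1:
  fixes q x :: real
  assumes "0 \<le> q" "q \<le> 1" "0 < k" "x \<le> k"
  shows "q ^ k \<le> q powr x"
proof (cases "q = 0")
  case False
  then have "q ^ k = q powr k"
    using assms(1) by (simp add: powr_realpow)
  also have "\<dots> \<le> q powr x"
    using False assms by (intro powr_mono') auto
  finally show ?thesis .
qed (use assms(3) in \<open>simp add: zero_power\<close>)

lemma choose_pairs_power_le:
  fixes p \<kappa> q :: real
  assumes "0 < \<kappa>" "\<kappa> * r \<le> k" "0 < k" "0 \<le> p"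
    and q: "q = exp 1 * r * p / (2 * \<kappa>)" "q \<le> 1"
  shows "real ((r choose 2) choose k) * p ^ k \<le> q powr (\<kappa> * r)"
proof -
  have "real ((r choose 2) choose k) * p ^ k \<le> (exp 1 * (r choose 2) / k) ^ k * p ^ k"
    using binomial_le_exp_power[OF assms(3)] assms(4) by (intro mult_right_mono) auto
  also have "\<dots> = (exp 1 * (r choose 2) * p / k) ^ k"
    by (simp add: power_mult_distrib[symmetric])
  also have "\<dots> \<le> q ^ k"
  proof (rule power_mono)
    have "real (r choose 2) / k \<le> r / (2 * \<kappa>)"
    proof (cases "r = 0")
      case False
      have "real (r choose 2) / k \<le> (real r ^ 2 / 2) / (\<kappa> * r)"
        by (rule frac_le) (use choose_two_le_half_square assms(1,2) False in auto)
      also have "\<dots> = r / (2 * \<kappa>)"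
        using False by (simp add: power2_eq_square)
      finally show ?thesis .
    qed (simp add: numeral_2_eq_2)
    then have "exp 1 * p * (real (r choose 2) / k) \<le> exp 1 * p * (r / (2 * \<kappa>))"
      using assms(4) by (intro mult_left_mono) auto
    then show "exp 1 * (r choose 2) * p / k \<le> q"
      unfolding q(1) by (simp add: mult_ac)
  qed (use assms in auto)
  also have "\<dots> \<le> q powr (\<kappa> * r)"
    using assms q by (intro power_le_powr_if_le_1) auto
  finally show ?thesis .
qed

lemma succ_mult_exp_le:
  fixes t :: real
  assumes "0 < t"
  shows "(t + 1) * exp (- (2 / t)) \<le> t"
proof -
  have "1 + 2 / t \<le> exp (2 / t)"
    by (rule exp_ge_add_one_self)
  then have "t + 1 \<le> t * exp (2 / t)"
    using assms by (simp add: field_simps)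
  then have "(t + 1) * exp (- (2 / t)) \<le> t * exp (2 / t) * exp (- (2 / t))"
    by (intro mult_right_mono) auto
  also have "\<dots> = t"
    by (simp add: exp_minus)
  finally show ?thesis .
qed

lemma double_le_exp_minus_1:
  fixes \<kappa> a :: real
  assumes "1 < \<kappa>" "2 * a * \<kappa> \<le> (\<kappa> - 1) * exp (-1)"
  shows "2 * a \<le> exp (-1)"
proof -
  have "\<kappa> * (2 * a) \<le> (\<kappa> - 1) * exp (-1)"
    using assms(2) by (simp only: ac_simps)
  also have "\<dots> \<le> \<kappa> * exp (-1)"
    by (intro mult_right_mono) auto
  finally show ?thesis
    using assms(1) by (subst (asm) mult_le_cancel_left_pos) auto
qed

definition beta_threshold :: "real \<Rightarrow> real \<Rightarrow> real" where
  "beta_threshold d \<kappa> =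
     1/2 * exp (- (1 + 2 / (\<kappa> - 1))) * (d / (2 * \<kappa>)) powr (- (1 + 1 / (\<kappa> - 1)))"

context
  fixes d \<kappa> :: real
  assumes \<kappa>: "1 < \<kappa>" "2 * \<kappa> \<le> d"
begin

lemma beta_threshold_pos: "0 < beta_threshold d \<kappa>"
  using \<kappa> unfolding beta_threshold_def by simp

lemma beta_threshold_identity:
  "exp (1 + \<kappa>) * beta_threshold d \<kappa> powr (\<kappa> - 1) * (d / (2 * \<kappa>)) powr \<kappa> = 2 powr (1 - \<kappa>)"
proof -
  define t where "t = \<kappa> - 1"
  define D where "D = d / (2 * \<kappa>)"
  have t: "t > 0" and D: "D > 0"
    unfolding t_def D_def using \<kappa> by auto
  have "beta_threshold d \<kappa> powr t
      = (1/2) powr t * exp (- (1 + 2 / t)) powr t * (D powr (- (1 + 1 / t))) powr t"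
    unfolding beta_threshold_def t_def[symmetric] D_def[symmetric] by (simp only: powr_mult)
  also have "\<dots> = exp (- (t + 2)) * D powr (- (t + 1)) / 2 powr t"
  proof -
    have "- (1 + 2 / t) * t = - (t + 2)" "- (1 + 1 / t) * t = - (t + 1)"
      using t by (simp_all add: field_simps)
    then show ?thesis
      by (simp add: exp_powr_real powr_powr powr_divide)
  qed
  finally have "exp (1 + \<kappa>) * beta_threshold d \<kappa> powr t * D powr \<kappa>
      = (exp (t + 2) * exp (- (t + 2))) * (D powr (t + 1) * D powr (- (t + 1))) / 2 powr t"
    unfolding t_def by (simp add: algebra_simps)
  also have "\<dots> = 1 / 2 powr t"
    using D by (simp flip: exp_add powr_add)
  finally show ?thesis
    unfolding t_def D_def by (simp add: powr_minus_divide[symmetric])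
qed

lemma beta_threshold_mult_le: "beta_threshold d \<kappa> * (d / (2 * \<kappa>)) \<le> exp (-1) / 2"
proof -
  define t where "t = \<kappa> - 1"
  define D where "D = d / (2 * \<kappa>)"
  have t: "t > 0" and D: "D \<ge> 1"
    unfolding t_def D_def using \<kappa> by auto
  have "D powr (- (1 + 1 / t)) * D powr 1 = D powr (- (1 + 1 / t) + 1)"
    by (rule powr_add[symmetric])
  then have DD: "D powr (- (1 + 1 / t)) * D = D powr (- (1 / t))"
    using D by simp
  have "beta_threshold d \<kappa> * D = 1/2 * exp (- (1 + 2 / t)) * D powr (- (1 / t))"
    unfolding beta_threshold_def t_def[symmetric] D_def[symmetric] DD[symmetric] by (simp only: mult.assoc)
  also have "\<dots> \<le> 1/2 * exp (-1) * 1"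
  proof (intro mult_mono)
    show "D powr (- (1 / t)) \<le> 1"
      using powr_mono[of "- (1 / t)" 0 D] D t by simp
  qed (use t in auto)
  finally show ?thesis
    unfolding D_def by simp
qed

lemma beta_threshold_le: "beta_threshold d \<kappa> \<le> 1/2 * exp (- (1 + 2 / (\<kappa> - 1)))"
proof -
  have D: "1 \<le> d / (2 * \<kappa>)"
    using \<kappa> by simp
  have "0 < 1 / (\<kappa> - 1)"
    using \<kappa> by simp
  then have "- (1 + 1 / (\<kappa> - 1)) \<le> 0"
    by linarith
  then have "(d / (2 * \<kappa>)) powr (- (1 + 1 / (\<kappa> - 1))) \<le> (d / (2 * \<kappa>)) powr 0"
    using D by (rule powr_mono)
  also have "\<dots> = 1"
    using \<kappa> by simp
  finally show ?thesis
    unfolding beta_threshold_def by (simp add: mult_left_le)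
qed

lemma beta_threshold_div_le: "2 * (2 * \<kappa> * beta_threshold d \<kappa> / d) * \<kappa> \<le> (\<kappa> - 1) * exp (-1)"
proof -
  have "2 * \<kappa> * beta_threshold d \<kappa> / d \<le> beta_threshold d \<kappa>"
    using \<kappa> beta_threshold_pos by (simp add: field_simps)
  also have "\<dots> \<le> 1/2 * exp (- (1 + 2 / (\<kappa> - 1)))"
    by (rule beta_threshold_le)
  finally have "2 * (2 * \<kappa> * beta_threshold d \<kappa> / d) * \<kappa> \<le> exp (- (1 + 2 / (\<kappa> - 1))) * \<kappa>"
    using \<kappa> by (intro mult_right_mono) auto
  also have "\<dots> = exp (-1) * (((\<kappa> - 1) + 1) * exp (- (2 / (\<kappa> - 1))))"
    by (simp add: mult_ac flip: exp_add)
  also have "\<dots> \<le> exp (-1) * (\<kappa> - 1)"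
    using \<kappa> by (intro mult_left_mono succ_mult_exp_le) auto
  finally show ?thesis
    by (simp only: ac_simps)
qed

lemma beta_threshold_ratio_bound: "3 / 5 \<le> 1 - 2 * (2 * \<kappa> * beta_threshold d \<kappa> / d)"
  using double_le_exp_minus_1[OF \<kappa>(1) beta_threshold_div_le] exp_minus_1_lt_2_div_5 by linarith

lemma beta_threshold_lt_1: "beta_threshold d \<kappa> < 1"
proof -
  have "beta_threshold d \<kappa> * 1 \<le> beta_threshold d \<kappa> * (d / (2 * \<kappa>))"
    using \<kappa> beta_threshold_pos by (intro mult_left_mono) auto
  also have "\<dots> \<le> exp (-1) / 2"
    by (rule beta_threshold_mult_le)
  finally show ?thesis
    using exp_minus_1_lt_2_div_5 by simp
qed

end

lemma two_powr_mult_inverse_powr_lt_1: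
  fixes \<kappa> a :: real
  assumes \<kappa>: "1 < \<kappa>" and a: "0 \<le> a" "2 * a * \<kappa> \<le> (\<kappa> - 1) * exp (-1)"
  shows "2 powr (1 - \<kappa>) * (1 / (1 - 2 * a)) powr \<kappa> < 1"
proof -
  have a2: "2 * a \<le> exp (-1)"
    using double_le_exp_minus_1[OF \<kappa> a(2)] .
  then have pos: "0 < 1 - 2 * a"
    using exp_minus_1_lt_2_div_5 by linarith
  define c where "c = 1 / (1 - 2 * a)"
  have "\<kappa> * ln c \<le> \<kappa> * (c - 1)"
    using pos \<kappa> ln_le_minus_one[of c] unfolding c_def by simp
  also have "\<dots> = 2 * a * \<kappa> / (1 - 2 * a)"
    using pos unfolding c_def by (simp add: field_simps)
  also have "\<dots> \<le> (\<kappa> - 1) * exp (-1) / (1 - exp (-1))"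
    using a pos a2 \<kappa> exp_minus_1_lt_2_div_5
    by (intro frac_le) (auto intro!: mult_nonneg_nonneg)
  also have "\<dots> = (\<kappa> - 1) / (exp 1 - 1)"
    using exp_1_gt_5_div_2 by (simp add: exp_minus field_simps)
  also have "\<dots> < (\<kappa> - 1) * ln 2"
  proof -
    have "1 / (exp 1 - 1) < (2/3 :: real)"
      using exp_1_gt_5_div_2 by (simp add: field_simps)
    then have "1 / (exp 1 - 1) < ln (2 :: real)"
      using ln2_ge_two_thirds by linarith
    then show ?thesis
      using \<kappa> mult_strict_left_mono[of "1 / (exp 1 - 1)" "ln 2" "\<kappa> - 1"] by simp
  qed
  finally have "\<kappa> * ln c < (\<kappa> - 1) * ln 2" .
  then have "(1 - \<kappa>) * ln 2 + \<kappa> * ln c < 0"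
    by (simp add: algebra_simps)
  moreover have "2 powr (1 - \<kappa>) * c powr \<kappa> = exp ((1 - \<kappa>) * ln 2 + \<kappa> * ln c)"
    using pos unfolding c_def by (simp add: powr_def exp_add mult.commute)
  ultimately show ?thesis
    unfolding c_def by simp
qed

lemma exp_div_mult_powr_le:
  fixes \<kappa> \<rho> \<beta> D c :: real
  assumes "1 < \<kappa>" "0 < \<rho>" "\<rho> \<le> \<beta>" "0 < D" "0 < c"
    and \<beta>: "exp (1 + \<kappa>) * \<beta> powr (\<kappa> - 1) * D powr \<kappa> = 2 powr (1 - \<kappa>)"
  shows "exp 1 / \<rho> * (exp 1 * \<rho> * D * c) powr \<kappa> \<le> 2 powr (1 - \<kappa>) * c powr \<kappa>"
proof -
  have "(exp 1 * \<rho> * D * c) powr \<kappa> = exp \<kappa> * \<rho> powr \<kappa> * D powr \<kappa> * c powr \<kappa>"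
    using assms by (simp add: powr_mult exp_powr_real)
  moreover have "\<rho> powr \<kappa> = \<rho> * \<rho> powr (\<kappa> - 1)"
    using assms(2) powr_add[of \<rho> 1 "\<kappa> - 1"] by simp
  ultimately have "exp 1 / \<rho> * (exp 1 * \<rho> * D * c) powr \<kappa>
      = exp (1 + \<kappa>) * \<rho> powr (\<kappa> - 1) * D powr \<kappa> * c powr \<kappa>"
    using assms(2) by (simp add: exp_add)
  also have "\<dots> \<le> exp (1 + \<kappa>) * \<beta> powr (\<kappa> - 1) * D powr \<kappa> * c powr \<kappa>"
    using assms(1-3) by (intro mult_right_mono mult_left_mono powr_mono2) auto
  finally show ?thesis
    unfolding \<beta> .
qed

lemma choose_pairs_density_le:
  fixes n r k :: nat and d \<kappa> \<beta> a :: real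
  defines "\<beta> \<equiv> beta_threshold d \<kappa>" and "a \<equiv> 2 * \<kappa> * \<beta> / d"
  assumes \<kappa>: "1 < \<kappa>" "2 * \<kappa> \<le> d" and r: "1 \<le> r" "real r \<le> \<beta> * n" and k: "\<kappa> * r \<le> k"
  shows "real ((r choose 2) choose k) * (d^2 / (n * d * (1 - 2 * a))) ^ k
           \<le> ((exp 1 * (r / n) * (d / (2 * \<kappa>)) * (1 / (1 - 2 * a))) powr \<kappa>) ^ r"
proof -
  define q where "q = exp 1 * (r / n) * (d / (2 * \<kappa>)) * (1 / (1 - 2 * a))"
  have a: "3 / 5 \<le> 1 - 2 * a"
    unfolding a_def \<beta>_def using beta_threshold_ratio_bound[OF \<kappa>] .
  have n: "0 < real n"
    using r by (cases "n = 0") auto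
  have "r / n * (d / (2 * \<kappa>)) \<le> \<beta> * (d / (2 * \<kappa>))"
    using r n \<kappa> by (intro mult_right_mono) (auto simp: field_simps)
  also have "\<dots> \<le> exp (-1) / 2"
    unfolding \<beta>_def using beta_threshold_mult_le[OF \<kappa>] .
  finally have "r / n * (d / (2 * \<kappa>)) * (1 / (1 - 2 * a)) \<le> exp (-1) / 2 * 2"
    using a \<kappa> by (intro mult_mono) (auto simp: field_simps)
  then have "exp 1 * (r / n * (d / (2 * \<kappa>)) * (1 / (1 - 2 * a))) \<le> exp 1 * (exp (-1) / 2 * 2)"
    by (rule mult_left_mono) simp
  then have q1: "q \<le> 1"
    unfolding q_def by (simp add: exp_minus mult.assoc)
  have q0: "0 < q"
    unfolding q_def using r n \<kappa> a by simp
  have q_eq: "q = exp 1 * r * (d^2 / (n * d * (1 - 2 * a))) / (2 * \<kappa>)"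
    unfolding q_def using n a \<kappa> by (simp add: field_simps power2_eq_square)
  have "0 < \<kappa> * r"
    using \<kappa> r by simp
  then have "0 < real k"
    using k by linarith
  then have "real ((r choose 2) choose k) * (d^2 / (n * d * (1 - 2 * a))) ^ k \<le> q powr (\<kappa> * r)"
    using \<kappa> k a by (intro choose_pairs_power_le[OF _ _ _ _ q_eq q1]) auto
  also have "\<dots> = (q powr \<kappa>) ^ r"
    using q0 by (simp add: powr_powr powr_realpow flip: powr_realpow)
  finally show ?thesis
    unfolding q_def .
qed

lemma union_bound_le_power:
  fixes n r k :: nat and d \<kappa> \<beta> a :: real
  defines "\<beta> \<equiv> beta_threshold d \<kappa>" and "a \<equiv> 2 * \<kappa> * \<beta> / d"
  assumes \<kappa>: "1 < \<kappa>" "2 * \<kappa> \<le> d" and r: "1 \<le> r" "real r \<le> \<beta> * n" and k: "\<kappa> * r \<le> k"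
  shows "real (n choose r) * real ((r choose 2) choose k) * (d^2 / (n * d * (1 - 2 * a))) ^ k
           \<le> (2 powr (1 - \<kappa>) * (1 / (1 - 2 * a)) powr \<kappa>) ^ r"
proof -
  define \<rho> where "\<rho> = real r / n"
  define c where "c = 1 / (1 - 2 * a)"
  have a: "3 / 5 \<le> 1 - 2 * a"
    unfolding a_def \<beta>_def using beta_threshold_ratio_bound[OF \<kappa>] .
  have n: "0 < real n"
    using r by (cases "n = 0") auto
  then have \<rho>: "0 < \<rho>" "\<rho> \<le> \<beta>"
    unfolding \<rho>_def using r by (auto simp: pos_divide_le_eq)
  have "real (n choose r) * (real ((r choose 2) choose k) * (d^2 / (n * d * (1 - 2 * a))) ^ k)
      \<le> (exp 1 * n / r) ^ r * ((exp 1 * \<rho> * (d / (2 * \<kappa>)) * c) powr \<kappa>) ^ r"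
  proof (rule mult_mono)
    show "0 \<le> real ((r choose 2) choose k) * (d^2 / (n * d * (1 - 2 * a))) ^ k"
      using \<kappa> a by simp
  qed (use binomial_le_exp_power[of r n] choose_pairs_density_le[OF \<kappa> r[unfolded \<beta>_def] k] r
        in \<open>auto simp: \<rho>_def c_def a_def \<beta>_def\<close>)
  also have "\<dots> = (exp 1 / \<rho> * (exp 1 * \<rho> * (d / (2 * \<kappa>)) * c) powr \<kappa>) ^ r"
    unfolding power_mult_distrib by (simp add: \<rho>_def)
  also have "\<dots> \<le> (2 powr (1 - \<kappa>) * c powr \<kappa>) ^ r"
  proof (rule power_mono)
    have "0 < c"
      unfolding c_def using a by simp
    then show "exp 1 / \<rho> * (exp 1 * \<rho> * (d / (2 * \<kappa>)) * c) powr \<kappa> \<le> 2 powr (1 - \<kappa>) * c powr \<kappa>"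
      using exp_div_mult_powr_le[OF \<kappa>(1) \<rho> _ _ beta_threshold_identity[OF \<kappa>, folded \<beta>_def]] \<kappa>
      by simp
  qed (use \<rho> in simp)
  finally show ?thesis
    unfolding c_def by (simp only: mult.assoc)
qed

subsection \<open>The union bound\<close>

lemma alpha_r_le:
  fixes \<kappa> :: real
  assumes "1 \<le> r" "r \<le> n"
    and "\<And>S. S \<subseteq> {1..n} \<Longrightarrow> card S = r \<Longrightarrow> real (edges_in E S) \<le> \<kappa> * r"
  shows "alpha_r n E r \<le> \<kappa>"
proof -
  define A where "A = {edges_in E S | S. S \<subseteq> {1..n} \<and> card S = r}"
  have "finite A"
    unfolding A_def by (simp add: setcompr_eq_image)
  moreover have "A \<noteq> {}"
    using assms(1,2) unfolding A_def by (intro ex_in_conv[THEN iffD1]) (auto intro!: exI[of _ "{1..r}"])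
  ultimately have "Max A \<in> A"
    by (rule Max_in)
  then have "real (Max A) \<le> \<kappa> * r"
    unfolding A_def using assms(3) by auto
  then show ?thesis
    unfolding alpha_r_def A_def[symmetric] using assms(1) by (simp add: field_simps)
qed

lemma dense_subset_if_alpha_r_gt:
  fixes \<kappa> :: real
  assumes "1 \<le> r" "r \<le> n" "0 \<le> \<kappa>" "\<kappa> < alpha_r n E r"
  shows "\<exists>S \<subseteq> {1..n}. card S = r \<and> nat \<lfloor>\<kappa> * r\<rfloor> + 1 \<le> edges_in E S"
proof -
  obtain S where S: "S \<subseteq> {1..n}" "card S = r" "\<kappa> * r < real (edges_in E S)"
    using alpha_r_le[OF assms(1,2)] assms(4) by (meson not_le)
  then have "nat \<lfloor>\<kappa> * r\<rfloor> < edges_in E S"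
    using assms(3) by (simp add: nat_less_iff floor_less_iff)
  then show ?thesis
    using S by auto
qed

lemma prob_reg_ge:
  fixes x :: real
  assumes "regular_graphs n \<Delta> \<noteq> {}" "\<And>E. E \<in> regular_graphs n \<Delta> \<Longrightarrow> \<not> P E \<Longrightarrow> Q E"
    and "real (card {E \<in> regular_graphs n \<Delta>. Q E}) \<le> x * card (regular_graphs n \<Delta>)"
  shows "1 - x \<le> prob_reg n \<Delta> P"
proof -
  let ?R = "regular_graphs n \<Delta>"
  have R: "0 < real (card ?R)"
    using assms(1) finite_regular_graphs by (simp add: card_gt_0_iff)
  have "card {E \<in> ?R. \<not> P E} \<le> card {E \<in> ?R. Q E}"
    using assms(2) finite_regular_graphs by (intro card_mono) auto
  moreover have "card {E \<in> ?R. P E} + card {E \<in> ?R. \<not> P E} = card ?R"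
    using finite_regular_graphs by (subst card_Un_disjoint[symmetric]) (auto intro: arg_cong[of _ _ card])
  ultimately have "real (card ?R) - x * card ?R \<le> real (card {E \<in> ?R. P E})"
    using assms(3) by (simp flip: of_nat_add)
  then have "(real (card ?R) - x * card ?R) / card ?R \<le> real (card {E \<in> ?R. P E}) / card ?R"
    using R by (intro divide_right_mono) auto
  then show ?thesis
    unfolding prob_reg_def using R by (simp add: diff_divide_distrib)
qed

lemma aas_regI:
  assumes "f \<longlonglongrightarrow> 0"
    and "\<forall>\<^sub>F n in sequentially. (even n \<or> even \<Delta>) \<longrightarrow> 1 - f n \<le> prob_reg n \<Delta> (P n)"
  shows "aas_reg \<Delta> P"
  unfolding aas_reg_def
proof (intro allI impI)
  fix \<epsilon> :: real assume "\<epsilon> > 0"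
  with assms(1) have "\<forall>\<^sub>F n in sequentially. f n < \<epsilon>"
    by (rule order_tendstoD(2))
  with assms(2) have "\<forall>\<^sub>F n in sequentially. (even n \<or> even \<Delta>) \<longrightarrow> 1 - \<epsilon> \<le> prob_reg n \<Delta> (P n)"
    by eventually_elim auto
  then show "\<exists>N. \<forall>n\<ge>N. (even n \<or> even \<Delta>) \<longrightarrow> 1 - \<epsilon> \<le> prob_reg n \<Delta> (P n)"
    unfolding eventually_sequentially .
qed

lemma filterlim_mult_real_sequentially:
  "0 < c \<Longrightarrow> filterlim (\<lambda>n. c * real n) at_top sequentially"
  by (rule filterlim_tendsto_pos_mult_at_top[OF tendsto_const _ filterlim_real_sequentially])

lemma power_nat_floor_tendsto_zero:
  fixes \<theta> \<beta> :: real
  assumes "0 \<le> \<theta>" "\<theta> < 1" "0 < \<beta>"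
  shows "(\<lambda>n. \<theta> ^ nat \<lfloor>\<beta> * real n\<rfloor>) \<longlonglongrightarrow> 0"
  using assms
  by (intro filterlim_compose[OF LIMSEQ_power_zero] filterlim_compose[OF filterlim_nat_sequentially]
      filterlim_compose[OF filterlim_floor_sequentially] filterlim_mult_real_sequentially) auto

lemma switching_denominator_bounds:
  fixes n \<Delta> k :: nat and \<kappa> \<beta> a :: real
  defines "\<beta> \<equiv> beta_threshold \<Delta> \<kappa>" and "a \<equiv> 2 * \<kappa> * \<beta> / \<Delta>"
  assumes \<kappa>: "1 < \<kappa>" "2 * \<kappa> \<le> \<Delta>" and "0 < n" and k: "real k \<le> \<kappa> * \<beta> * n + 1"
    and n: "real (4 * \<Delta> + 2 * \<Delta>^2 + 2) \<le> 2 * \<kappa> * \<beta> * n"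
  shows "0 < n * \<Delta> * (1 - 2 * a)"
    and "n * \<Delta> * (1 - 2 * a) \<le> real (n * \<Delta>) - real (2 * k + 4 * \<Delta> + 2 * \<Delta>^2)"
proof -
  have "3 / 5 \<le> 1 - 2 * a"
    unfolding a_def \<beta>_def using beta_threshold_ratio_bound \<kappa> by simp
  then show "0 < n * \<Delta> * (1 - 2 * a)"
    using \<kappa> \<open>0 < n\<close> by simp
  have "n * \<Delta> * (1 - 2 * a) = real (n * \<Delta>) - 4 * \<kappa> * \<beta> * n"
    unfolding a_def using \<kappa> by (simp add: field_simps)
  also have "\<dots> \<le> real (n * \<Delta>) - real (2 * k + 4 * \<Delta> + 2 * \<Delta>^2)"
    using k n by simp
  finally show "n * \<Delta> * (1 - 2 * a) \<le> real (n * \<Delta>) - real (2 * k + 4 * \<Delta> + 2 * \<Delta>^2)" .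
qed

lemma card_regular_graphs_alpha_r_gt_le:
  fixes n \<Delta> r :: nat and \<kappa> \<beta> a :: real
  defines "\<beta> \<equiv> beta_threshold \<Delta> \<kappa>" and "a \<equiv> 2 * \<kappa> * \<beta> / \<Delta>"
  assumes \<kappa>: "1 < \<kappa>" "2 * \<kappa> \<le> \<Delta>" and r: "1 \<le> r" "real r \<le> \<beta> * n"
    and n: "real (4 * \<Delta> + 2 * \<Delta>^2 + 2) \<le> 2 * \<kappa> * \<beta> * n"
  shows "real (card {E \<in> regular_graphs n \<Delta>. \<kappa> < alpha_r n E r})
           \<le> (2 powr (1 - \<kappa>) * (1 / (1 - 2 * a)) powr \<kappa>) ^ r * card (regular_graphs n \<Delta>)"
proof -
  define k where "k = nat \<lfloor>\<kappa> * r\<rfloor> + 1"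
  have "\<kappa> * r \<le> \<kappa> * \<beta> * n"
    using mult_left_mono[OF r(2), of \<kappa>] \<kappa> by (simp add: mult.assoc)
  moreover have "real (nat \<lfloor>\<kappa> * r\<rfloor>) = of_int \<lfloor>\<kappa> * r\<rfloor>"
    using \<kappa> by simp
  ultimately have k: "\<kappa> * r \<le> k" "real k \<le> \<kappa> * \<beta> * n + 1"
    unfolding k_def using of_int_floor_le[of "\<kappa> * r"] real_of_int_floor_add_one_gt[of "\<kappa> * r"]
    by linarith+
  have "0 < n"
    using r by (cases "n = 0") auto
  have "\<beta> * n \<le> n"
    using beta_threshold_pos[OF \<kappa>] beta_threshold_lt_1[OF \<kappa>] unfolding \<beta>_def
    by (intro mult_left_le_one_le) auto
  then have "r \<le> n"
    using r by linarith
  note L = switching_denominator_bounds[OF \<kappa> \<open>0 < n\<close> k(2)[unfolded \<beta>_def] n[unfolded \<beta>_def]]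
  have "real (card {E \<in> regular_graphs n \<Delta>. \<kappa> < alpha_r n E r})
      \<le> real (card {E \<in> regular_graphs n \<Delta>. \<exists>S \<subseteq> {1..n}. card S = r \<and> k \<le> edges_in E S})"
    using dense_subset_if_alpha_r_gt[OF r(1) \<open>r \<le> n\<close>] \<kappa> finite_regular_graphs
    unfolding k_def by (intro of_nat_mono card_mono) auto
  also have "\<dots> \<le> real (n choose r) * real ((r choose 2) choose k) * (real \<Delta> ^ 2 / (n * \<Delta> * (1 - 2 * a))) ^ k
      * card (regular_graphs n \<Delta>)"
    unfolding a_def \<beta>_def by (rule card_regular_graphs_with_dense_subset_le[OF L])
  also have "\<dots> \<le> (2 powr (1 - \<kappa>) * (1 / (1 - 2 * a)) powr \<kappa>) ^ r * card (regular_graphs n \<Delta>)"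
    using union_bound_le_power[OF \<kappa> r[unfolded \<beta>_def] k(1)]
    unfolding a_def \<beta>_def by (intro mult_right_mono) auto
  finally show ?thesis .
qed

lemma prob_reg_mono:
  assumes "\<And>E. E \<in> regular_graphs n \<Delta> \<Longrightarrow> P E \<Longrightarrow> Q E"
  shows "prob_reg n \<Delta> P \<le> prob_reg n \<Delta> Q"
proof -
  have "card {E \<in> regular_graphs n \<Delta>. P E} \<le> card {E \<in> regular_graphs n \<Delta>. Q E}"
    using assms finite_regular_graphs by (intro card_mono) auto
  then show ?thesis
    unfolding prob_reg_def by (intro divide_right_mono) auto
qed

lemma eventually_prob_alpha_r_le:
  fixes \<Delta> :: nat and \<kappa> \<beta> \<theta> :: real
  defines "\<beta> \<equiv> beta_threshold \<Delta> \<kappa>"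
    and "\<theta> \<equiv> 2 powr (1 - \<kappa>) * (1 / (1 - 2 * (2 * \<kappa> * \<beta> / \<Delta>))) powr \<kappa>"
  assumes \<kappa>: "1 < \<kappa>" "2 * \<kappa> \<le> \<Delta>"
  shows "\<forall>\<^sub>F n in sequentially. (even n \<or> even \<Delta>) \<longrightarrow>
           1 - \<theta> ^ nat \<lfloor>\<beta> * n\<rfloor> \<le> prob_reg n \<Delta> (\<lambda>E. alpha_r n E (nat \<lfloor>\<beta> * n\<rfloor>) \<le> \<kappa>)"
proof -
  have "0 < \<beta>"
    unfolding \<beta>_def using beta_threshold_pos[OF \<kappa>] .
  then have "\<forall>\<^sub>F n in sequentially. 1 \<le> \<beta> * n"
    using filterlim_mult_real_sequentially unfolding filterlim_at_top by blast
  moreover have "\<forall>\<^sub>F n in sequentially. real (4 * \<Delta> + 2 * \<Delta>^2 + 2) \<le> 2 * \<kappa> * \<beta> * n"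
    using filterlim_mult_real_sequentially[of "2 * \<kappa> * \<beta>"] \<kappa> \<open>0 < \<beta>\<close>
    unfolding filterlim_at_top by simp
  ultimately show ?thesis
    using eventually_gt_at_top[of \<Delta>]
  proof eventually_elim
    case (elim n)
    let ?r = "nat \<lfloor>\<beta> * n\<rfloor>"
    have r: "1 \<le> ?r" "real ?r \<le> \<beta> * n"
      using elim by linarith+
    show ?case
    proof (intro impI prob_reg_ge[where Q = "\<lambda>E. \<kappa> < alpha_r n E ?r"])
      show "even n \<or> even \<Delta> \<Longrightarrow> regular_graphs n \<Delta> \<noteq> {}"
        using elim by (intro regular_graphs_nonempty) auto
      show "real (card {E \<in> regular_graphs n \<Delta>. \<kappa> < alpha_r n E ?r}) \<le> \<theta> ^ ?r * card (regular_graphs n \<Delta>)"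
        unfolding \<theta>_def \<beta>_def
        using card_regular_graphs_alpha_r_gt_le[OF \<kappa> r[unfolded \<beta>_def]] elim(2)[unfolded \<beta>_def] by simp
    qed auto
  qed
qed

theorem lemma4p3:
  fixes \<Delta> :: nat and \<kappa> \<beta> :: real
  assumes "\<Delta> \<ge> 3"
    and "1 < \<kappa>" and "\<kappa> \<le> real \<Delta> / 2"
    and "\<beta> = 1/2 * exp (- (1 + 2 / (\<kappa> - 1)))
                 * (real \<Delta> / (2 * \<kappa>)) powr (- (1 + 1 / (\<kappa> - 1)))"
  shows "aas_reg \<Delta> (\<lambda>n E. real n \<ge> 1 / \<beta> \<longrightarrow>
                          alpha_r n E (nat \<lfloor>\<beta> * real n\<rfloor>) \<le> \<kappa>)"
proof -
  have \<kappa>: "1 < \<kappa>" "2 * \<kappa> \<le> real \<Delta>"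
    using assms(2,3) by auto
  have \<beta>: "\<beta> = beta_threshold \<Delta> \<kappa>" "0 < \<beta>"
    using assms(4) beta_threshold_pos[OF \<kappa>] unfolding beta_threshold_def by auto
  define \<theta> where "\<theta> = 2 powr (1 - \<kappa>) * (1 / (1 - 2 * (2 * \<kappa> * \<beta> / \<Delta>))) powr \<kappa>"
  have \<theta>: "0 \<le> \<theta>" "\<theta> < 1"
    unfolding \<theta>_def \<beta>(1)
    by (simp, intro two_powr_mult_inverse_powr_lt_1 beta_threshold_div_le)
       (use \<kappa> beta_threshold_pos[OF \<kappa>] in auto)
  have "\<forall>\<^sub>F n in sequentially. (even n \<or> even \<Delta>) \<longrightarrow>
      1 - \<theta> ^ nat \<lfloor>\<beta> * n\<rfloor> \<le> prob_reg n \<Delta> (\<lambda>E. alpha_r n E (nat \<lfloor>\<beta> * n\<rfloor>) \<le> \<kappa>)"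
    unfolding \<theta>_def \<beta>(1) by (rule eventually_prob_alpha_r_le[OF \<kappa>])
  then have "\<forall>\<^sub>F n in sequentially. (even n \<or> even \<Delta>) \<longrightarrow>
      1 - \<theta> ^ nat \<lfloor>\<beta> * n\<rfloor> \<le> prob_reg n \<Delta> (\<lambda>E. 1 / \<beta> \<le> n \<longrightarrow> alpha_r n E (nat \<lfloor>\<beta> * n\<rfloor>) \<le> \<kappa>)"
    by eventually_elim (blast intro: order_trans prob_reg_mono)
  then show ?thesis
    using power_nat_floor_tendsto_zero[OF \<theta> \<beta>(2)] by (intro aas_regI)
qed

end
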